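(* Let $Z\colon\mathbb{R}^n\to\mathbb{R}^m$ be a jointly measurable random map defined on the probability space $(\Omega,\mathcal{F},\mathbb{P})$. Let $\mu$ be a Borel probability measure on $\mathbb{R}^n$ and let $\gamma\in\mathbb{R}$. Then the set $$\mathcal{D}=\Big\{(\omega,t)\in\Omega\times\mathbb{R}^n:\ \liminf_{r\to0+}r^{-\gamma}\mu(\{s: Z(s,\omega)\in B(Z(t,\omega),r)\})=0\Big\}$$ belongs to $\mathcal{F}\otimes\mathcal{B}(\mathbb{R}^n)$.
   Context: $Z$ is jointly measurable if $(t,\omega)\mapsto Z(t,\omega)$ is measurable from $\mathcal{B}(\mathbb{R}^n)\otimes\mathcal{F}$ to $\mathcal{B}(\mathbb{R}^m)$. $B(z,r)$ is the closed Euclidean ball in $\mathbb{R}^m$. *)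

theory Defs
  imports "HOL-Probability.Probability"
begin

end

theory Submission
  imports Defs
begin

text \<open>
  Since the ball mass \<open>r \<mapsto> \<mu> {s. Z s \<omega> \<in> B(Z t \<omega>, r)}\<close> is nondecreasing and
  \<open>r\<^sup>-\<^sup>\<gamma>\<close> is continuous, a radius witnessing that the function is small can be moved
  slightly to the left onto a rational number. Hence the liminf vanishes iff for all \<open>j, k\<close>
  some rational \<open>0 < q < 1/(j+1)\<close> has \<open>q\<^sup>-\<^sup>\<gamma> \<mu>(\<dots>) < 1/(k+1)\<close>, a countable
  Boolean combination of conditions each involving a single ball mass. Each ball mass is jointly measurable
  in \<open>(\<omega>, t)\<close>, being the measure of a section of a measurable subset of \<open>(\<Omega> \<times> \<real>\<^sup>n) \<times> \<real>\<^sup>n\<close>.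
\<close>

lemma Liminf_at_right_0_eq_0_iff_frequently:
  fixes g :: "real \<Rightarrow> real"
  assumes nonneg: "\<And>r. 0 < r \<Longrightarrow> 0 \<le> g r"
  shows "Liminf (at_right 0) (\<lambda>r. ereal (g r)) = 0 \<longleftrightarrow>
         (\<forall>\<epsilon>>0. \<exists>\<^sub>F r in at_right 0. g r < \<epsilon>)"
proof
  assume lim: "Liminf (at_right 0) (\<lambda>r. ereal (g r)) = 0"
  show "\<forall>\<epsilon>>0. \<exists>\<^sub>F r in at_right 0. g r < \<epsilon>"
  proof (intro allI impI)
    fix \<epsilon> :: real
    assume "\<epsilon> > 0"
    show "\<exists>\<^sub>F r in at_right 0. g r < \<epsilon>"
    proof (rule ccontr)
      assume "\<not> (\<exists>\<^sub>F r in at_right 0. g r < \<epsilon>)"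
      then have "\<forall>\<^sub>F r in at_right 0. ereal \<epsilon> \<le> ereal (g r)"
        by (simp add: not_frequently not_less)
      then have "ereal \<epsilon> \<le> 0"
        using lim Liminf_bounded[of "ereal \<epsilon>"] by (metis trivial_limit_at_right_real)
      with \<open>\<epsilon> > 0\<close> show False by simp
    qed
  qed
next
  assume freq: "\<forall>\<epsilon>>0. \<exists>\<^sub>F r in at_right 0. g r < \<epsilon>"
  have "0 \<le> Liminf (at_right 0) (\<lambda>r. ereal (g r))"
    by (intro Liminf_bounded eventually_at_right_less[THEN eventually_mono]) (simp add: nonneg)
  moreover have "\<not> 0 < Liminf (at_right 0) (\<lambda>r. ereal (g r))"
  proof
    assume "0 < Liminf (at_right 0) (\<lambda>r. ereal (g r))"
    then obtain \<epsilon> :: real where "0 < \<epsilon>" "ereal \<epsilon> < Liminf (at_right 0) (\<lambda>r. ereal (g r))"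
      using ereal_dense2 by (metis ereal_less(2) less_ereal.simps(1))
    then have "\<forall>\<^sub>F r in at_right 0. ereal \<epsilon> < ereal (g r)"
      using le_Liminf_iff[of "Liminf (at_right 0) (\<lambda>r. ereal (g r))" "at_right 0" "\<lambda>r. ereal (g r)"] by blast
    then have "\<forall>\<^sub>F r in at_right 0. \<not> g r < \<epsilon>"
      by (rule eventually_mono) simp
    with freq \<open>0 < \<epsilon>\<close> show False
      by (simp add: frequently_def)
  qed
  ultimately show "Liminf (at_right 0) (\<lambda>r. ereal (g r)) = 0" by simp
qed

lemma frequently_at_right_0_iff:
  fixes P :: "real \<Rightarrow> bool"
  shows "(\<exists>\<^sub>F r in at_right 0. P r) \<longleftrightarrow> (\<forall>e>0. \<exists>r. 0 < r \<and> r < e \<and> P r)"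
  by (auto simp: frequently_def eventually_at_right_field)

lemma rat_below_powr_mult_mono_lt:
  fixes h :: "real \<Rightarrow> real"
  assumes "mono h" and "0 < y" and "y powr a * h y < \<epsilon>"
  obtains q :: rat where "0 < real_of_rat q" "real_of_rat q < y"
    "real_of_rat q powr a * h (real_of_rat q) < \<epsilon>"
proof -
  have "((\<lambda>r. r powr a * h y) \<longlongrightarrow> y powr a * h y) (at_left y)"
    using \<open>0 < y\<close> by (intro tendsto_intros) auto
  then have "\<forall>\<^sub>F r in at_left y. r powr a * h y < \<epsilon>"
    using assms(3) by (rule order_tendstoD)
  moreover have "\<forall>\<^sub>F r in at_left y. 0 < r"
    using eventually_at_left_real[OF \<open>0 < y\<close>] by (rule eventually_mono) simp
  ultimately have "\<forall>\<^sub>F r in at_left y. 0 < r \<and> r powr a * h y < \<epsilon>"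
    by (rule eventually_conj[rotated])
  then obtain b where "b < y" and b: "\<And>r. b < r \<Longrightarrow> r < y \<Longrightarrow> 0 < r \<and> r powr a * h y < \<epsilon>"
    unfolding eventually_at_left_field by blast
  obtain q :: rat where q: "b < real_of_rat q" "real_of_rat q < y"
    using of_rat_dense[OF \<open>b < y\<close>] by blast
  have "real_of_rat q powr a * h (real_of_rat q) \<le> real_of_rat q powr a * h y"
    using \<open>mono h\<close> q(2) by (intro mult_left_mono) (auto simp: mono_def)
  with b[OF q] q(2) show thesis
    by (intro that[of q]) linarith+
qed

lemma frequently_at_right_0_powr_mult_mono_iff_rat:
  fixes h :: "real \<Rightarrow> real"
  assumes "mono h"
  shows "(\<exists>\<^sub>F r in at_right 0. r powr a * h r < \<epsilon>) \<longleftrightarrow>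
         (\<forall>j::nat. \<exists>q::rat. 0 < real_of_rat q \<and> real_of_rat q < 1 / Suc j \<and>
            real_of_rat q powr a * h (real_of_rat q) < \<epsilon>)"
  unfolding frequently_at_right_0_iff
proof (intro iffI allI impI)
  fix j :: nat
  assume "\<forall>e>0. \<exists>r. 0 < r \<and> r < e \<and> r powr a * h r < \<epsilon>"
  then obtain y where y: "0 < y" "y < 1 / Suc j" "y powr a * h y < \<epsilon>"
    by (metis of_nat_0_less_iff zero_less_Suc zero_less_divide_1_iff)
  obtain q :: rat where "0 < real_of_rat q" "real_of_rat q < y"
      "real_of_rat q powr a * h (real_of_rat q) < \<epsilon>"
    using rat_below_powr_mult_mono_lt[OF assms y(1,3)] .
  with y(2) show "\<exists>q::rat. 0 < real_of_rat q \<and> real_of_rat q < 1 / Suc j \<and>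
      real_of_rat q powr a * h (real_of_rat q) < \<epsilon>"
    by (intro exI[of _ q]) auto
next
  fix e :: real
  assume rat: "\<forall>j::nat. \<exists>q::rat. 0 < real_of_rat q \<and> real_of_rat q < 1 / Suc j \<and>
      real_of_rat q powr a * h (real_of_rat q) < \<epsilon>" and "0 < e"
  then obtain j :: nat where "1 / Suc j < e"
    by (metis nat_approx_posE)
  moreover obtain q :: rat where "0 < real_of_rat q" "real_of_rat q < 1 / Suc j"
      "real_of_rat q powr a * h (real_of_rat q) < \<epsilon>"
    using rat by blast
  ultimately show "\<exists>r. 0 < r \<and> r < e \<and> r powr a * h r < \<epsilon>"
    by (intro exI[of _ "real_of_rat q"]) auto
qed

lemma all_pos_iff_all_inverse_Suc:
  fixes P :: "real \<Rightarrow> bool"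
  assumes "\<And>\<epsilon> \<epsilon>'. 0 < \<epsilon> \<Longrightarrow> \<epsilon> \<le> \<epsilon>' \<Longrightarrow> P \<epsilon> \<Longrightarrow> P \<epsilon>'"
  shows "(\<forall>\<epsilon>>0. P \<epsilon>) \<longleftrightarrow> (\<forall>k::nat. P (1 / Suc k))"
proof (intro iffI allI impI)
  fix \<epsilon> :: real
  assume "\<forall>k::nat. P (1 / Suc k)" and "0 < \<epsilon>"
  then obtain k :: nat where "1 / Suc k < \<epsilon>"
    by (metis nat_approx_posE)
  with \<open>\<forall>k::nat. P (1 / Suc k)\<close> show "P \<epsilon>"
    by (auto intro: assms[of "1 / Suc k"])
qed simp

lemma Liminf_powr_mult_mono_eq_0_iff_rat:
  fixes h :: "real \<Rightarrow> real"
  assumes "mono h" and "\<And>r. 0 \<le> h r"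
  shows "Liminf (at_right 0) (\<lambda>r. ereal (r powr a * h r)) = 0 \<longleftrightarrow>
    (\<forall>k::nat. \<forall>j::nat. \<exists>q::rat. 0 < real_of_rat q \<and> real_of_rat q < 1 / Suc j \<and>
       real_of_rat q powr a * h (real_of_rat q) < 1 / Suc k)"
proof -
  have "Liminf (at_right 0) (\<lambda>r. ereal (r powr a * h r)) = 0 \<longleftrightarrow>
      (\<forall>\<epsilon>>0. \<exists>\<^sub>F r in at_right 0. r powr a * h r < \<epsilon>)"
    by (rule Liminf_at_right_0_eq_0_iff_frequently) (simp add: assms(2))
  also have "\<dots> \<longleftrightarrow> (\<forall>k::nat. \<exists>\<^sub>F r in at_right 0. r powr a * h r < 1 / Suc k)"
    by (rule all_pos_iff_all_inverse_Suc) (auto elim: frequently_elim1)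
  finally show ?thesis
    by (simp only: frequently_at_right_0_powr_mult_mono_iff_rat[OF assms(1)])
qed

lemma measurable_measure_cball_preimage:
  fixes Z :: "'a::topological_space \<Rightarrow> 'w \<Rightarrow> 'b::{metric_space, second_countable_topology}"
  assumes "sigma_finite_measure \<mu>" and sets_\<mu>: "sets \<mu> = sets borel"
    and Z[measurable]: "(\<lambda>(t, \<omega>). Z t \<omega>) \<in> borel_measurable (borel \<Otimes>\<^sub>M M)"
  shows "(\<lambda>(\<omega>, t). measure \<mu> {s. Z s \<omega> \<in> cball (Z t \<omega>) r}) \<in> borel_measurable (M \<Otimes>\<^sub>M borel)"
proof -
  interpret \<mu>: sigma_finite_measure \<mu> by fact
  let ?N = "M \<Otimes>\<^sub>M (borel :: 'a measure)"
  define Q where "Q = {p \<in> space (?N \<Otimes>\<^sub>M \<mu>).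
    dist (Z (snd (fst p)) (fst (fst p))) (Z (snd p) (fst (fst p))) \<le> r}"
  have [measurable]: "(\<lambda>x. x) \<in> measurable \<mu> borel"
    using sets_\<mu> by (simp add: measurable_ident_sets)
  have "Q \<in> sets (?N \<Otimes>\<^sub>M \<mu>)"
    unfolding Q_def by measurable
  then have "(\<lambda>x. enn2real (emeasure \<mu> (Pair x -` Q))) \<in> borel_measurable ?N"
    by (intro borel_measurable_enn2real \<mu>.measurable_emeasure_Pair)
  moreover have "Pair (\<omega>, t) -` Q = {s. Z s \<omega> \<in> cball (Z t \<omega>) r}" if "(\<omega>, t) \<in> space ?N" for \<omega> t
    using that sets_eq_imp_space_eq[OF sets_\<mu>] by (auto simp: Q_def space_pair_measure)
  ultimately show ?thesis
    by (subst measurable_cong[where g = "\<lambda>x. enn2real (emeasure \<mu> (Pair x -` Q))"])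
      (auto simp: measure_def)
qed

lemma mono_measure_cball_preimage:
  fixes f :: "'a::topological_space \<Rightarrow> 'b::metric_space"
  assumes "finite_measure \<mu>" and sets_\<mu>: "sets \<mu> = sets borel" and f: "f \<in> borel_measurable borel"
  shows "mono (\<lambda>r. measure \<mu> {s. f s \<in> cball c r})"
proof (rule monoI)
  fix r r' :: real
  assume "r \<le> r'"
  have "{s. f s \<in> cball c r'} \<in> sets \<mu>"
    using measurable_sets[OF f, of "cball c r'"] by (simp add: sets_\<mu> vimage_def)
  with \<open>r \<le> r'\<close> show "measure \<mu> {s. f s \<in> cball c r} \<le> measure \<mu> {s. f s \<in> cball c r'}"
    by (intro finite_measure.finite_measure_mono[OF \<open>finite_measure \<mu>\<close>]) auto
qed

theorem lemma3p5:
  fixes M :: "'w measure"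
    and Z :: "real ^ 'n \<Rightarrow> 'w \<Rightarrow> real ^ 'm"
    and \<mu> :: "(real ^ 'n) measure"
    and \<gamma> :: real
  assumes "prob_space M"
    and "(\<lambda>(t, \<omega>). Z t \<omega>) \<in> borel_measurable (borel \<Otimes>\<^sub>M M)"
    and "prob_space \<mu>"
    and "sets \<mu> = sets borel"
  shows "{(\<omega>, t) \<in> space M \<times> UNIV.
           Liminf (at_right (0::real))
             (\<lambda>r. ereal (r powr (-\<gamma>) * measure \<mu> {s. Z s \<omega> \<in> cball (Z t \<omega>) r})) = 0}
         \<in> sets (M \<Otimes>\<^sub>M borel)"
proof -
  interpret \<mu>: prob_space \<mu> by fact
  define F where "F \<omega> t r = measure \<mu> {s. Z s \<omega> \<in> cball (Z t \<omega>) r}" for \<omega> t r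
  have [measurable]: "(\<lambda>x. F (fst x) (snd x) r) \<in> borel_measurable (M \<Otimes>\<^sub>M borel)" for r
    using measurable_measure_cball_preimage[OF \<mu>.sigma_finite_measure assms(4,2)]
    by (simp add: F_def case_prod_beta')
  have F_mono: "mono (F \<omega> t)" if "\<omega> \<in> space M" for \<omega> t
    using measurable_Pair_compose_split[OF assms(2) measurable_ident measurable_const[OF that]]
    unfolding F_def id_def by (rule mono_measure_cball_preimage[OF \<mu>.finite_measure_axioms assms(4)])
  have "Liminf (at_right 0) (\<lambda>r. ereal (r powr (-\<gamma>) * F \<omega> t r)) = 0 \<longleftrightarrow>
    (\<forall>k::nat. \<forall>j::nat. \<exists>q::rat. 0 < real_of_rat q \<and> real_of_rat q < 1 / Suc j \<and>
       real_of_rat q powr (-\<gamma>) * F \<omega> t (real_of_rat q) < 1 / Suc k)"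
    if "\<omega> \<in> space M" for \<omega> t
    using F_mono[OF that] by (rule Liminf_powr_mult_mono_eq_0_iff_rat) (simp add: F_def)
  then have "{(\<omega>, t) \<in> space M \<times> UNIV.
      Liminf (at_right 0) (\<lambda>r. ereal (r powr (-\<gamma>) * F \<omega> t r)) = 0} =
    {x \<in> space (M \<Otimes>\<^sub>M borel). \<forall>k::nat. \<forall>j::nat. \<exists>q::rat. 0 < real_of_rat q \<and>
      real_of_rat q < 1 / Suc j \<and> real_of_rat q powr (-\<gamma>) * F (fst x) (snd x) (real_of_rat q) < 1 / Suc k}"
    by (auto simp: space_pair_measure)
  also have "\<dots> \<in> sets (M \<Otimes>\<^sub>M borel)"
    by measurable
  finally show ?thesis
    unfolding F_def .
qed

end
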